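(* Let $n\geq2$, $\sigma>0$ and $x_0\in(0,\infty)$, and let $u$ be the solution of the initial value problem $$u''=\Big[\frac{x}{2}u'+\frac{n-1}{u}-\frac{u}{2}\Big]\big(1+(u')^2\big),\qquad u(x_0)=\sigma x_0,\qquad u'(x_0)\geq\sigma,$$ maximally extended to the right on an interval $(x_0,x_\infty)$ (with $u>0$). Then $x_\infty<\infty$, and if $u(x_0)\geq\sqrt{2(n-1)}$, then $x_\infty\leq\big(1+\frac{1}{n-1}\big)x_0$. *)

theory Defs
  imports "HOL-Analysis.Analysis"
begin

definition ode_rhs :: "nat \<Rightarrow> real \<Rightarrow> real \<Rightarrow> real \<Rightarrow> real" where
  "ode_rhs n x y p = (x / 2 * p + (real n - 1) / y - y / 2) * (1 + p\<^sup>2)"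

definition is_sol :: "nat \<Rightarrow> real \<Rightarrow> ereal \<Rightarrow> (real \<Rightarrow> real) \<Rightarrow> (real \<Rightarrow> real) \<Rightarrow> bool" where
  "is_sol n a b u u' \<longleftrightarrow>
     (\<forall>x. a \<le> x \<and> ereal x < b \<longrightarrow>
        u x > 0 \<and>
        (u has_real_derivative u' x) (at x within {a..}) \<and>
        (u' has_real_derivative ode_rhs n x (u x) (u' x)) (at x within {a..}))"

definition is_maximal_sol :: "nat \<Rightarrow> real \<Rightarrow> ereal \<Rightarrow> (real \<Rightarrow> real) \<Rightarrow> (real \<Rightarrow> real) \<Rightarrow> bool" where
  "is_maximal_sol n a b u u' \<longleftrightarrow>
     is_sol n a b u u' \<and>
     \<not> (\<exists>c v v'. b < c \<and> is_sol n a c v v' \<and> (\<forall>x. a \<le> x \<and> ereal x < b \<longrightarrow> v x = u x))"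

end

theory Submission imports Defs begin

text \<open>Let \<open>y = x u' / u\<close>. Since \<open>(x u' - u)' = x u''\<close> and the ODE makes \<open>u'' > 0\<close>
  wherever \<open>x u' \<ge> u\<close>, the condition \<open>y \<ge> 1\<close> persists from \<open>x\<^sub>0\<close> on; hence \<open>u\<close> and
  \<open>u / x \<ge> \<sigma>\<close> increase, and \<open>u\<close> exceeds \<open>\<surd>(2(n-1))\<close> by \<open>x\<^sub>0 + \<surd>(2(n-1))/\<sigma>\<close>.
  From a point \<open>a\<close> where \<open>u \<ge> \<surd>(2(n-1))\<close>, the ODE gives \<open>x y' \<ge> (n - 5/4) y\<^sup>3\<close>, i.e.
  \<open>(1/y\<^sup>2)' \<le> -(2n - 5/2)/x\<close>. As \<open>(4n-5)(x-a)/(x+a)\<close> grows no faster than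
  \<open>(2n - 5/2) ln (x/a)\<close>, the sum \<open>1/y\<^sup>2 + (4n-5)(x-a)/(x+a)\<close> is nonincreasing; it is at most
  \<open>1\<close> at \<open>a\<close>, while at \<open>x = (1 + 1/(n-1)) a\<close> its second summand alone equals
  \<open>(4n-5)/(2n-1) \<ge> 1\<close>, so the solution cannot reach that point.\<close>

lemma is_solD:
  assumes "is_sol n a b u u'" "a \<le> x" "ereal x < b"
  shows "u x > 0" "(u has_real_derivative u' x) (at x within {a..})"
    "(u' has_real_derivative ode_rhs n x (u x) (u' x)) (at x within {a..})"
  using assms unfolding is_sol_def by auto

lemma is_sol_has_derivative_at:
  assumes "is_sol n a b u u'" "a < x" "ereal x < b"
  shows "(u has_real_derivative u' x) (at x)"
    "(u' has_real_derivative ode_rhs n x (u x) (u' x)) (at x)"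
proof -
  have "at x within {a..} = at x" using assms(2) by (intro at_within_interior) auto
  then show "(u has_real_derivative u' x) (at x)"
    "(u' has_real_derivative ode_rhs n x (u x) (u' x)) (at x)"
    using is_solD[OF assms(1) _ assms(3)] assms(2) by auto
qed

lemma is_sol_continuous_on:
  assumes "is_sol n a b u u'" "ereal t < b"
  shows "continuous_on {a..t} u" "continuous_on {a..t} u'"
proof -
  have "continuous (at x within {a..t}) u \<and> continuous (at x within {a..t}) u'"
    if "x \<in> {a..t}" for x
  proof -
    have "ereal x < b" using that assms(2) by (meson atLeastAtMost_iff ereal_less_eq(3) le_less_trans)
    then have "continuous (at x within {a..}) u" "continuous (at x within {a..}) u'"
      using is_solD(2,3)[OF assms(1)] that by (auto intro: DERIV_continuous)
    then show ?thesis by (auto intro: continuous_within_subset)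
  qed
  then show "continuous_on {a..t} u" "continuous_on {a..t} u'"
    unfolding continuous_on_eq_continuous_within by auto
qed

lemma is_sol_subinterval:
  assumes "is_sol n a b u u'" "a \<le> a'"
  shows "is_sol n a' b u u'"
proof -
  have sub: "{a'..} \<subseteq> {a..}" using assms(2) by auto
  show ?thesis using assms unfolding is_sol_def by (auto intro: DERIV_subset[OF _ sub])
qed

lemma nonneg_on_interval_barrier:
  fixes f f' :: "real \<Rightarrow> real"
  assumes cont: "continuous_on {a..t} f" and fa: "f a \<ge> 0"
    and der: "\<And>x. a \<le> x \<Longrightarrow> x < t \<Longrightarrow> (f has_real_derivative f' x) (at x within {a..})"
    and pos: "\<And>x. a \<le> x \<Longrightarrow> x < t \<Longrightarrow> f x \<ge> 0 \<Longrightarrow> f' x > 0"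
    and x: "x \<in> {a..t}"
  shows "f x \<ge> 0"
proof (rule ccontr)
  assume "\<not> f x \<ge> 0"
  then have fx: "f x < 0" by simp
  define S where "S = {a..x} \<inter> f -` {0..}"
  have "closed S" unfolding S_def
    by (rule continuous_closed_preimage) (use cont x in \<open>auto intro: continuous_on_subset\<close>)
  moreover have "a \<in> S" using x fa by (auto simp: S_def)
  moreover have "bdd_above S" by (auto simp: S_def bdd_above_def)
  ultimately have "Sup S \<in> S" using closed_contains_Sup by blast
  define s where "s = Sup S"
  have s: "a \<le> s" "s \<le> x" "f s \<ge> 0" using \<open>Sup S \<in> S\<close> by (auto simp: S_def s_def)
  with fx have "s < x" by (metis linorder_not_le order_antisym)
  with x have "s < t" by auto
  obtain d where d: "d > 0" "\<forall>h>0. s + h \<in> {a..} \<longrightarrow> h < d \<longrightarrow> f s < f (s + h)"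
    using has_real_derivative_pos_inc_right[OF der[OF s(1) \<open>s < t\<close>] pos[OF s(1) \<open>s < t\<close> s(3)]]
    by blast
  define h where "h = min (d/2) (x - s)"
  have h: "h > 0" "h < d" "s + h \<le> x" using d \<open>s < x\<close> by (auto simp: h_def)
  then have "s + h \<in> S" using d s by (auto simp: S_def)
  then have "s + h \<le> s" unfolding s_def by (rule cSup_upper) fact
  with h show False by simp
qed

lemma is_sol_u_le_x_deriv:
  assumes n: "n \<ge> 2" and a: "a > 0" and sol: "is_sol n a b u u'"
    and start: "u a \<le> a * u' a" and t: "a \<le> t" "ereal t < b"
  shows "u t \<le> t * u' t"
proof -
  have in_dom: "ereal x < b" if "x \<le> t" for x
    using that t(2) by (meson ereal_less_eq(3) le_less_trans)
  have "0 \<le> t * u' t - u t"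
  proof (rule nonneg_on_interval_barrier[where f = "\<lambda>x. x * u' x - u x"
        and f' = "\<lambda>x. x * ode_rhs n x (u x) (u' x)" and x = t])
    show "continuous_on {a..t} (\<lambda>x. x * u' x - u x)"
      using is_sol_continuous_on[OF sol t(2)] by (intro continuous_intros) auto
  next
    fix x assume x: "a \<le> x" "x < t"
    show "((\<lambda>x. x * u' x - u x) has_real_derivative x * ode_rhs n x (u x) (u' x)) (at x within {a..})"
      using is_solD(2,3)[OF sol x(1) in_dom] x
      by (auto intro!: derivative_eq_intros)
  next
    fix x assume x: "a \<le> x" "x < t" and nonneg: "0 \<le> x * u' x - u x"
    have "u x > 0" using is_solD(1)[OF sol x(1) in_dom] x by simp
    then have "(x * u' x - u x)/2 + (real n - 1)/u x > 0"
      using nonneg n by (intro add_nonneg_pos) auto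
    moreover have "x/2 * u' x + (real n - 1)/u x - u x/2 = (x * u' x - u x)/2 + (real n - 1)/u x"
      by (simp add: field_simps)
    ultimately have "x/2 * u' x + (real n - 1)/u x - u x/2 > 0" by linarith
    moreover have "x > 0" using a x by simp
    ultimately show "0 < x * ode_rhs n x (u x) (u' x)"
      unfolding ode_rhs_def by (intro mult_pos_pos) (auto intro: add_pos_nonneg)
  qed (use start t in auto)
  then show ?thesis by simp
qed

lemma is_sol_deriv_pos:
  assumes "n \<ge> 2" "a > 0" "is_sol n a b u u'" "u a \<le> a * u' a" "a \<le> t" "ereal t < b"
  shows "u' t > 0"
proof -
  have "0 < u t" using is_solD(1)[OF assms(3,5,6)] .
  also have "\<dots> \<le> t * u' t" using is_sol_u_le_x_deriv[OF assms] .
  finally show ?thesis using assms(2,5) by (simp add: zero_less_mult_iff)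
qed

lemma is_sol_increasing:
  assumes "n \<ge> 2" "a > 0" "is_sol n a b u u'" "u a \<le> a * u' a" "a \<le> t" "ereal t < b"
  shows "u a \<le> u t"
proof (rule DERIV_nonneg_imp_increasing_open[OF assms(5)])
  fix x assume x: "a < x" "x < t"
  then have "ereal x < b" using assms(6) by (meson ereal_less_eq(3) le_less_trans less_imp_le)
  then show "\<exists>y. (u has_real_derivative y) (at x) \<and> 0 \<le> y"
    using is_sol_has_derivative_at(1)[OF assms(3) x(1)] is_sol_deriv_pos[OF assms(1-4)] x
    by (meson less_imp_le)
qed (rule is_sol_continuous_on(1)[OF assms(3,6)])

lemma is_sol_ratio_increasing:
  assumes "n \<ge> 2" "a > 0" "is_sol n a b u u'" "u a \<le> a * u' a" "a \<le> t" "ereal t < b"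
  shows "u a / a \<le> u t / t"
proof (rule DERIV_nonneg_imp_increasing_open[OF assms(5)])
  fix x assume x: "a < x" "x < t"
  then have "ereal x < b" using assms(6) by (meson ereal_less_eq(3) le_less_trans less_imp_le)
  moreover have "x > 0" using assms(2) x by simp
  ultimately have "((\<lambda>x. u x / x) has_real_derivative (x * u' x - u x) / x\<^sup>2) (at x)"
    using is_sol_has_derivative_at(1)[OF assms(3) x(1)]
    by (auto intro!: derivative_eq_intros simp: power2_eq_square algebra_simps)
  moreover have "u x \<le> x * u' x"
    using is_sol_u_le_x_deriv[OF assms(1-4)] x \<open>ereal x < b\<close> by simp
  ultimately show "\<exists>y. ((\<lambda>x. u x / x) has_real_derivative y) (at x) \<and> 0 \<le> y" by force
next
  show "continuous_on {a..t} (\<lambda>x. u x / x)"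
    using is_sol_continuous_on(1)[OF assms(3,6)] assms(2) by (intro continuous_intros) auto
qed

text \<open>With \<open>y = x P / U\<close> one has \<open>x y' = y - y\<^sup>2 + x\<^sup>2 u'' / U\<close>; the ODE together with
  \<open>y \<ge> 1\<close> and \<open>U\<^sup>2 \<ge> 2(n-1)\<close> gives \<open>x\<^sup>2 u'' / U \<ge> (n-1) y\<^sup>3\<close>, and
  \<open>y - y\<^sup>2 + y\<^sup>3/4 = y (1 - y/2)\<^sup>2 \<ge> 0\<close>.\<close>
lemma ratio_derivative_lower_bound:
  fixes x U P :: real
  assumes n: "n \<ge> 1" and x: "x > 0" and U: "U > 0"
    and big: "2 * (real n - 1) \<le> U\<^sup>2" and ratio: "U \<le> x * P"
  shows "(real n - 5/4) * (x * P / U)^3 \<le> x * (((P + x * ode_rhs n x U P) * U - x * P\<^sup>2) / U\<^sup>2)"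
proof -
  define m where "m = real n - 1"
  define y where "y = x * P / U"
  have m: "m \<ge> 0" using n by (simp add: m_def)
  have y1: "y \<ge> 1" using ratio U by (simp add: y_def field_simps)
  define Q where "Q = (x * P - U)/2 + m/U"
  have Q: "Q \<ge> 0" using ratio U m by (simp add: Q_def)
  have rhs: "ode_rhs n x U P = Q * (1 + P\<^sup>2)"
    by (simp add: ode_rhs_def Q_def m_def field_simps)
  have lhs: "x * (((P + x * ode_rhs n x U P) * U - x * P\<^sup>2) / U\<^sup>2) = y + x\<^sup>2 * (Q * (1 + P\<^sup>2)) / U - y\<^sup>2"
    unfolding rhs using U x by (simp add: y_def field_simps power2_eq_square)
  have "x\<^sup>2 * (Q * P\<^sup>2) / U \<le> x\<^sup>2 * (Q * (1 + P\<^sup>2)) / U"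
    using Q U by (intro divide_right_mono mult_left_mono) auto
  moreover have "x\<^sup>2 * (Q * P\<^sup>2) / U = y\<^sup>2 * (U\<^sup>2 * (y - 1)/2 + m)"
    using U x by (simp add: Q_def y_def field_simps power2_eq_square)
  moreover have "2 * m * (y - 1) \<le> U\<^sup>2 * (y - 1)"
    using big y1 unfolding m_def by (intro mult_right_mono) auto
  then have "y\<^sup>2 * (m * (y - 1) + m) \<le> y\<^sup>2 * (U\<^sup>2 * (y - 1)/2 + m)"
    by (intro mult_left_mono) auto
  moreover have "y - y\<^sup>2 + y^3/4 = y * (1 - y/2)\<^sup>2"
    by (simp add: algebra_simps power2_eq_square power3_eq_cube)
  then have "0 \<le> y - y\<^sup>2 + y^3/4" using y1 by simp
  ultimately show ?thesis
    unfolding lhs y_def[symmetric] m_def by (simp add: algebra_simps power2_eq_square power3_eq_cube)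
qed

lemma is_sol_ratio_has_derivative:
  assumes "is_sol n a b u u'" "a < x" "ereal x < b"
  shows "((\<lambda>x. x * u' x / u x) has_real_derivative
      ((u' x + x * ode_rhs n x (u x) (u' x)) * u x - x * (u' x)\<^sup>2) / (u x)\<^sup>2) (at x)"
  using is_sol_has_derivative_at[OF assms] is_solD(1)[OF assms(1) _ assms(3)] assms(2)
  by (auto intro!: derivative_eq_intros simp: power2_eq_square algebra_simps)

definition lyapunov :: "nat \<Rightarrow> real \<Rightarrow> (real \<Rightarrow> real) \<Rightarrow> (real \<Rightarrow> real) \<Rightarrow> real \<Rightarrow> real" where
  "lyapunov n a u u' x = (u x / (x * u' x))\<^sup>2 + (4 * real n - 5) * (x - a) / (x + a)"

lemma lyapunov_antimono:
  assumes n: "n \<ge> 2" and a: "a > 0" and sol: "is_sol n a b u u'"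
    and start: "u a \<le> a * u' a" and big: "2 * (real n - 1) \<le> (u a)\<^sup>2"
    and X: "a \<le> X" "ereal X < b"
  shows "lyapunov n a u u' X \<le> lyapunov n a u u' a"
proof (rule DERIV_nonpos_imp_decreasing_open[OF X(1)])
  fix x assume x: "a < x" "x < X"
  have xb: "ereal x < b" using x X(2) by (meson ereal_less_eq(3) le_less_trans less_imp_le)
  define y where "y = x * u' x / u x"
  define y' where "y' = ((u' x + x * ode_rhs n x (u x) (u' x)) * u x - x * (u' x)\<^sup>2) / (u x)\<^sup>2"
  have U: "u x > 0" using is_solD(1)[OF sol _ xb] x by simp
  have P: "u' x > 0" using is_sol_deriv_pos[OF n a sol start _ xb] x by simp
  have "u a \<le> u x" using is_sol_increasing[OF n a sol start _ xb] x by simp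
  moreover have "ereal a < b" using X by (meson ereal_less_eq(3) le_less_trans)
  then have "0 < u a" using is_solD(1)[OF sol order_refl] by simp
  ultimately have "(u a)\<^sup>2 \<le> (u x)\<^sup>2" by (intro power_mono) auto
  then have key: "(real n - 5/4) * y^3 \<le> x * y'"
    unfolding y_def y'_def using n a x U big is_sol_u_le_x_deriv[OF n a sol start _ xb]
    by (intro ratio_derivative_lower_bound) auto
  have x0: "x > 0" using a x by simp
  then have ypos: "y > 0" using U P by (simp add: y_def)
  define r where "r x = x * u' x / u x" for x
  have "lyapunov n a u u' = (\<lambda>x. (inverse (r x))\<^sup>2 + (4 * real n - 5) * (x - a) / (x + a))"
    by (simp add: fun_eq_iff lyapunov_def r_def inverse_divide)
  moreover have "(r has_real_derivative y') (at x)" "r x = y"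
    using is_sol_ratio_has_derivative[OF sol x(1) xb] unfolding r_def[abs_def] y_def y'_def by auto
  then have "((\<lambda>x. (inverse (r x))\<^sup>2 + (4 * real n - 5) * (x - a) / (x + a))
      has_real_derivative - 2 * y' / y^3 + (4 * real n - 5) * (2 * a) / (x + a)\<^sup>2) (at x)"
    using ypos x0 a
    by (auto intro!: derivative_eq_intros simp: field_simps power2_eq_square power3_eq_cube)
  moreover have "(4 * real n - 5) * (2 * a) / (x + a)\<^sup>2 \<le> 2 * y' / y^3"
  proof -
    have "4 * a * x \<le> (x + a)\<^sup>2" using sum_squares_ge_zero[of "x - a" 0]
      by (simp add: power2_eq_square algebra_simps)
    then have "2 * a / (x + a)\<^sup>2 \<le> 1 / (2 * x)" using x0 a by (simp add: field_simps)
    then have "(4 * real n - 5) * (2 * a / (x + a)\<^sup>2) \<le> (4 * real n - 5) * (1 / (2 * x))"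
      using n by (intro mult_left_mono) auto
    also have "\<dots> = 2 * ((real n - 5/4) / x)" using x0 by (simp add: field_simps)
    also have "(real n - 5/4) / x \<le> y' / y^3" using key ypos x0 by (simp add: field_simps)
    finally show ?thesis by simp
  qed
  ultimately show "\<exists>z. (lyapunov n a u u' has_real_derivative z) (at x) \<and> z \<le> 0" by force
next
  have "x * u' x \<noteq> 0" if "x \<in> {a..X}" for x
  proof -
    have "ereal x < b" using that X(2) by (meson atLeastAtMost_iff ereal_less_eq(3) le_less_trans)
    then have "u' x > 0" using is_sol_deriv_pos[OF n a sol start] that by simp
    then show ?thesis using that a by simp
  qed
  then show "continuous_on {a..X} (lyapunov n a u u')"
    unfolding lyapunov_def using is_sol_continuous_on[OF sol X(2)] a
    by (intro continuous_intros) auto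
qed

lemma is_sol_blowup_bound:
  assumes n: "n \<ge> 2" and a: "a > 0" and sol: "is_sol n a b u u'" and ab: "ereal a < b"
    and start: "u a \<le> a * u' a" and big: "sqrt (2 * (real n - 1)) \<le> u a"
  shows "b \<le> ereal ((1 + 1 / (real n - 1)) * a)"
proof (rule ccontr)
  define m where "m = real n - 1"
  define X where "X = (1 + 1 / m) * a"
  have m: "m \<ge> 1" using n by (simp add: m_def)
  assume "\<not> b \<le> ereal ((1 + 1 / (real n - 1)) * a)"
  then have Xb: "ereal X < b" by (simp add: X_def m_def)
  have aX: "a < X" using a m by (simp add: X_def field_simps)
  have "lyapunov n a u u' X \<le> lyapunov n a u u' a"
    using lyapunov_antimono[OF n a sol start sqrt_le_D[OF big]] aX Xb by simp
  moreover have "lyapunov n a u u' a \<le> 1"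
  proof -
    have "0 < u a" using is_solD(1)[OF sol order_refl ab] .
    then have "0 \<le> u a / (a * u' a)" "u a / (a * u' a) \<le> 1"
      using start by (auto simp: divide_le_eq_1)
    then show ?thesis by (simp add: lyapunov_def power_le_one)
  qed
  moreover have "lyapunov n a u u' X > 1"
  proof -
    have "u X > 0" "u' X > 0"
      using is_solD(1)[OF sol _ Xb] is_sol_deriv_pos[OF n a sol start _ Xb] aX by auto
    then have "(u X / (X * u' X))\<^sup>2 > 0" using a aX by simp
    moreover have "X - a = a / m" "X + a = a * (2 * m + 1) / m"
      using m by (simp_all add: X_def field_simps)
    then have "(X - a) / (X + a) = 1 / (2 * m + 1)"
      using a m by (simp only:) (simp add: divide_simps)
    then have "(4 * real n - 5) * (X - a) / (X + a) = (4 * m - 1) / (2 * m + 1)"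
      unfolding times_divide_eq_right[symmetric] by (simp add: m_def)
    moreover have "(4 * m - 1) / (2 * m + 1) \<ge> 1" using m by (simp add: field_simps)
    ultimately show ?thesis unfolding lyapunov_def by linarith
  qed
  ultimately show False by simp
qed

theorem lemma1:
  fixes n :: nat and \<sigma> x0 :: real and x_inf :: ereal and u u' :: "real \<Rightarrow> real"
  assumes "n \<ge> 2" and "\<sigma> > 0" and "x0 > 0"
    and "ereal x0 < x_inf"
    and "is_maximal_sol n x0 x_inf u u'"
    and "u x0 = \<sigma> * x0" and "u' x0 \<ge> \<sigma>"
  shows "x_inf < \<infinity> \<and>
         (u x0 \<ge> sqrt (2 * (real n - 1)) \<longrightarrow> x_inf \<le> ereal ((1 + 1 / (real n - 1)) * x0))"
proof -
  note n = assms(1) and \<sigma> = assms(2) and x0 = assms(3)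
  have sol: "is_sol n x0 x_inf u u'" using assms(5) by (simp add: is_maximal_sol_def)
  have start: "u x0 \<le> x0 * u' x0" using assms(3,6,7) by simp
  have bound: "x_inf \<le> ereal ((1 + 1 / (real n - 1)) * t)"
    if "x0 \<le> t" "ereal t < x_inf" "sqrt (2 * (real n - 1)) \<le> u t" for t
    using is_sol_blowup_bound[OF n _ is_sol_subinterval[OF sol] that(2)
        is_sol_u_le_x_deriv[OF n x0 sol start that(1,2)] that(3)] x0 that(1) by simp
  have "x_inf < \<infinity>"
  proof (rule ccontr)
    assume "\<not> x_inf < \<infinity>"
    then have inf: "x_inf = \<infinity>" by simp
    define x1 where "x1 = x0 + sqrt (2 * (real n - 1)) / \<sigma>"
    have x1: "x0 \<le> x1" using \<sigma> n by (simp add: x1_def)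
    have "\<sigma> \<le> u x1 / x1"
      using is_sol_ratio_increasing[OF n x0 sol start x1] assms(3,6) inf by simp
    then have "\<sigma> * x1 \<le> u x1" using x0 x1 by (simp add: field_simps)
    moreover have "\<sigma> * x1 = \<sigma> * x0 + sqrt (2 * (real n - 1))" using \<sigma> by (simp add: x1_def field_simps)
    moreover have "\<sigma> * x0 > 0" using \<sigma> x0 by simp
    ultimately have "sqrt (2 * (real n - 1)) \<le> u x1" by linarith
    then show False using bound[OF x1] inf by simp
  qed
  then show ?thesis using bound[OF order_refl assms(4)] by blast
qed

end
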